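(* Let $N\ge 1$ be an integer and let $q,c,d$ be complex numbers with $q\neq 0$. Then the $N+1$ polynomials $\big(h_k(x;c)\,h_{N-k}(x;d)\big)_{k=0}^N$ form a basis of the space of polynomials in $x$ of degree at most $N$ if and only if none of the following holds: (i) $c,d\neq 0$ and $c/d\in\{q^{1-N},q^{2-N},\dots,q^{N-1}\}$; (ii) $cd\in\{q^{1-N},q^{2-N},\dots,q^{-1},1\}$; (iii) $c=d=0$.
   Context: For a complex number $a$ and integer $k\ge 0$, the Askey–Wilson monomial is the polynomial $h_k(x;a)=h_k(x;a;q)=\prod_{j=0}^{k-1}(1-axq^j+a^2q^{2j})$ (empty product $=1$). Equivalently, if $\xi+\xi^{-1}=x$, then $h_k(x;a)=(a\xi;q)_k(a\xi^{-1};q)_k$, where $(a;q)_k=\prod_{j=0}^{k-1}(1-aq^j)$. *)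

theory Defs
  imports Complex_Main "HOL-Computational_Algebra.Polynomial"
begin

definition aw_monomial :: "complex \<Rightarrow> nat \<Rightarrow> complex \<Rightarrow> complex poly" where
  "aw_monomial q k a = (\<Prod>j<k. [:1 + a^2 * q^(2*j), - a * q^j:])"

definition is_basis_deg_le :: "nat \<Rightarrow> (nat \<Rightarrow> complex poly) \<Rightarrow> bool" where
  "is_basis_deg_le N P \<longleftrightarrow>
     (\<forall>k\<le>N. degree (P k) \<le> N) \<and>
     (\<forall>p. degree p \<le> N \<longrightarrow> (\<exists>a. p = (\<Sum>k\<le>N. smult (a k) (P k)))) \<and>
     (\<forall>a. (\<Sum>k\<le>N. smult (a k) (P k)) = 0 \<longrightarrow> (\<forall>k\<le>N. a k = 0))"

end

theory Submission
  imports Defs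
begin

(* Since h_{k+1}(x;c) = (1 - c x + c^2) h_k(x;cq), multiplying the family for (N, cq, d) by
   1 - c x + c^2 and the family for (N, c, dq) by 1 - d x + d^2 yields members of the family
   for (N + 1, c, d).  The two linear factors are linearly independent iff (c - d)(1 - cd) <> 0,
   and then every polynomial of degree at most N + 1 is a combination of them with coefficients
   of degree at most N.  The exceptional conditions are stable under these shifts, so induction
   on N shows that the family spans, and a dimension count makes it a basis.  Conversely, in
   each exceptional case with (c, d) <> (0, 0) there is a t such that x = t + 1/t is a common
   zero of all members, so the constant 1 is not in their span; for c = d = 0 all members are 1. *)

lemma linear_pair_decomposition:
  fixes u0 u1 v0 v1 :: "'a::field"
  assumes det: "u0 * v1 - u1 * v0 \<noteq> 0" and p: "degree p \<le> Suc N"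
  obtains p1 p2 where "degree p1 \<le> N" "degree p2 \<le> N"
    "p = [:u0, u1:] * p1 + [:v0, v1:] * p2"
proof -
  define D where "D = u0 * v1 - u1 * v0"
  define u where "u = [:u0, u1:]"
  define v where "v = [:v0, v1:]"
  obtain a r where p_eq: "p = pCons a r" by (cases p)
  have r: "degree r \<le> N" using p by (cases "r = 0") (auto simp: p_eq)
  define p1 where "p1 = smult (inverse D) ([:a * v1:] - smult v0 r)"
  define p2 where "p2 = smult (inverse D) (smult u0 r - [:a * u1:])"
  \<comment> \<open>Cramer's rule writes both \<open>1\<close> and \<open>x\<close> as combinations of \<open>u\<close> and \<open>v\<close>.\<close>
  have "u * p1 + v * p2 =
      smult (inverse D) (smult a (smult v1 u - smult u1 v) + r * (smult u0 v - smult v0 u))"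
    by (simp add: p1_def p2_def algebra_simps smult_add_right smult_diff_right)
  also have "smult v1 u - smult u1 v = [:D:]"
    by (simp add: u_def v_def D_def algebra_simps)
  also have "smult u0 v - smult v0 u = [:0, D:]"
    by (simp add: u_def v_def D_def algebra_simps)
  also have "smult a [:D:] + r * [:0, D:] = smult D p"
    by (simp add: p_eq algebra_simps)
  finally have "p = [:u0, u1:] * p1 + [:v0, v1:] * p2"
    using det by (simp add: u_def v_def D_def)
  moreover have "degree p1 \<le> N" "degree p2 \<le> N"
    using r by (auto simp: p1_def p2_def intro!: degree_diff_le order.trans[OF degree_smult_le])
  ultimately show thesis using that by blast
qed

interpretation poly_smult: vector_space "smult :: 'a::field \<Rightarrow> 'a poly \<Rightarrow> 'a poly"
  by unfold_locales (simp_all add: smult_add_right smult_add_left)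

definition spans_deg_le :: "nat \<Rightarrow> (nat \<Rightarrow> 'a::field poly) \<Rightarrow> bool" where
  "spans_deg_le N P \<longleftrightarrow> (\<forall>p. degree p \<le> N \<longrightarrow> (\<exists>a. p = (\<Sum>k\<le>N. smult (a k) (P k))))"

lemma independent_monomials:
  "poly_smult.independent ((\<lambda>i. monom (1::'a::field) i) ` {..N})"
proof (rule poly_smult.independent_if_scalars_zero)
  have inj: "inj_on (\<lambda>i. monom (1::'a) i) {..N}"
    by (auto simp: inj_on_def monom_eq_iff')
  fix f :: "'a poly \<Rightarrow> 'a" and x :: "'a poly"
  assume zero: "(\<Sum>x\<in>(\<lambda>i. monom 1 i) ` {..N}. smult (f x) x) = 0"
    and x: "x \<in> (\<lambda>i. monom 1 i) ` {..N}"
  then obtain i where i: "i \<le> N" "x = monom 1 i" by auto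
  have "(\<Sum>j\<le>N. smult (f (monom 1 j)) (monom 1 j)) = 0"
    using zero sum.reindex_cong[OF inj refl, of "\<lambda>x. smult (f x) x"] by simp
  then have "coeff (\<Sum>j\<le>N. smult (f (monom 1 j)) (monom 1 j)) i = 0" by simp
  then show "f x = 0"
    using i by (simp add: coeff_sum coeff_monom if_distrib sum.delta cong: if_cong)
qed simp

lemma card_ge_if_deg_le_subset_span:
  fixes T :: "'a::field poly set"
  assumes "{p. degree p \<le> N} \<subseteq> poly_smult.span T" and "finite T"
  shows "Suc N \<le> card T"
proof -
  let ?M = "(\<lambda>i. monom (1::'a) i) ` {..N}"
  have "?M \<subseteq> poly_smult.span T"
    using assms(1) by (auto intro: order.trans[OF degree_monom_le])
  then have "card ?M \<le> card T"
    using poly_smult.independent_span_bound[OF assms(2) independent_monomials] by blast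
  moreover have "card ?M = Suc N"
    by (subst card_image) (auto simp: inj_on_def monom_eq_iff')
  ultimately show ?thesis by simp
qed

lemma lincomb_in_span:
  "(\<Sum>k\<in>A. smult (a k) (P k)) \<in> poly_smult.span (P ` A)"
  by (intro poly_smult.span_sum poly_smult.span_scale poly_smult.span_base) auto

text \<open>Otherwise some \<open>P k\<close> lies in the span of the other \<open>N\<close> members, which would then span
  the \<open>N + 1\<close> independent monomials of degree at most \<open>N\<close>.\<close>
lemma spans_deg_le_imp_independent:
  fixes P :: "nat \<Rightarrow> 'a::field poly"
  assumes span: "spans_deg_le N P" and zero: "(\<Sum>k\<le>N. smult (a k) (P k)) = 0" and k: "k \<le> N"
  shows "a k = 0"
proof (rule ccontr)
  assume ak: "a k \<noteq> 0"
  let ?T = "P ` ({..N} - {k})"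
  have "smult (a k) (P k) = - (\<Sum>j\<in>{..N} - {k}. smult (a j) (P j))"
    using zero k by (simp add: sum.remove[of "{..N}" k] eq_neg_iff_add_eq_0)
  then have "smult (inverse (a k)) (smult (a k) (P k)) =
      smult (- inverse (a k)) (\<Sum>j\<in>{..N} - {k}. smult (a j) (P j))"
    by simp
  then have "P k = smult (- inverse (a k)) (\<Sum>j\<in>{..N} - {k}. smult (a j) (P j))"
    using ak by simp
  then have "P k \<in> poly_smult.span ?T"
    by (metis lincomb_in_span poly_smult.span_scale)
  then have "P ` {..N} \<subseteq> poly_smult.span ?T"
    by (auto intro: poly_smult.span_base)
  then have "poly_smult.span (P ` {..N}) \<subseteq> poly_smult.span ?T"
    by (simp add: poly_smult.span_minimal)
  moreover have "{p. degree p \<le> N} \<subseteq> poly_smult.span (P ` {..N})"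
    using span lincomb_in_span unfolding spans_deg_le_def by fastforce
  ultimately have "Suc N \<le> card ?T"
    by (intro card_ge_if_deg_le_subset_span) auto
  also have "card ?T \<le> N"
    using k card_image_le[of "{..N} - {k}" P] by simp
  finally show False by simp
qed

lemma is_basis_deg_le_iff_spans:
  assumes "\<forall>k\<le>N. degree (P k) \<le> N"
  shows "is_basis_deg_le N P \<longleftrightarrow> spans_deg_le N P"
  using assms spans_deg_le_imp_independent
  unfolding is_basis_deg_le_def spans_deg_le_def by blast

lemma not_spans_deg_le_if_common_zero:
  assumes "\<forall>k\<le>N. poly (P k) z = 0"
  shows "\<not> spans_deg_le N P"
proof
  assume "spans_deg_le N P"
  then obtain a where "1 = (\<Sum>k\<le>N. smult (a k) (P k))"
    unfolding spans_deg_le_def using degree_1 le0 by metis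
  then have "poly 1 z = poly (\<Sum>k\<le>N. smult (a k) (P k)) z"
    by (rule arg_cong)
  also have "\<dots> = (\<Sum>k\<le>N. a k * poly (P k) z)"
    by (simp add: poly_sum)
  also have "\<dots> = 0" using assms by simp
  finally show False by simp
qed

lemma not_spans_deg_le_if_constant:
  fixes P :: "nat \<Rightarrow> 'a::field poly"
  assumes "N \<ge> 1" and "\<forall>k\<le>N. degree (P k) = 0"
  shows "\<not> spans_deg_le N P"
proof
  assume "spans_deg_le N P"
  moreover have "degree [:0, 1:] \<le> N" using assms(1) by simp
  ultimately obtain a where "[:0, 1:] = (\<Sum>k\<le>N. smult (a k) (P k))"
    unfolding spans_deg_le_def by blast
  moreover have "degree (\<Sum>k\<le>N. smult (a k) (P k)) = 0"
    using assms(2) by (intro degree_sum_le[THEN le_zero_eq[THEN iffD1]]) (auto intro: order.trans[OF degree_smult_le])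
  ultimately have "degree [:0, 1::'a:] = 0" by simp
  then show False by simp
qed

lemma aw_monomial_Suc:
  "aw_monomial q (Suc k) a = [:1 + a^2, -a:] * aw_monomial q k (a * q)"
proof -
  have "aw_monomial q (Suc k) a = [:1 + a^2 * q^(2*0), - a * q^0:] *
      (\<Prod>j<k. [:1 + a^2 * q^(2 * Suc j), - a * q^Suc j:])"
    unfolding aw_monomial_def by (rule prod.lessThan_Suc_shift)
  also have "(\<Prod>j<k. [:1 + a^2 * q^(2 * Suc j), - a * q^Suc j:]) = aw_monomial q k (a * q)"
    unfolding aw_monomial_def
    by (intro prod.cong refl) (simp add: power_mult_distrib power_add mult_ac power2_eq_square)
  finally show ?thesis by simp
qed

lemma degree_aw_monomial_le: "degree (aw_monomial q k a) \<le> k"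
proof (induction k arbitrary: a)
  case 0
  then show ?case by (simp add: aw_monomial_def)
next
  case (Suc k)
  have "degree (aw_monomial q (Suc k) a) \<le> degree [:1 + a^2, -a:] + degree (aw_monomial q k (a * q))"
    unfolding aw_monomial_Suc by (rule degree_mult_le)
  moreover have "degree [:1 + a^2, -a:] \<le> 1" by (simp add: degree_pCons_le)
  ultimately show ?case using Suc[of "a * q"] by linarith
qed

lemma aw_monomial_param_0: "aw_monomial q k 0 = 1"
  unfolding aw_monomial_def by (simp add: pCons_one)

text \<open>With \<open>x = t + t\<^sup>-\<^sup>1\<close> the factor \<open>1 - s x + s\<^sup>2\<close> equals \<open>(1 - s t) (1 - s t\<^sup>-\<^sup>1)\<close>.\<close>
lemma poly_aw_monomial_eq_0:
  assumes "j < k" "t \<noteq> 0" "a * q^j = t \<or> a * q^j = inverse t"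
  shows "poly (aw_monomial q k a) (t + inverse t) = 0"
proof -
  have "1 + s^2 - (t + inverse t) * s = 0" if "s = t \<or> s = inverse t" for s
    using assms(2) that by (auto simp: field_simps power2_eq_square)
  then have "1 + (a * q^j)^2 - (t + inverse t) * (a * q^j) = 0" using assms(3) by blast
  then have "poly [:1 + a^2 * q^(2*j), - a * q^j:] (t + inverse t) = 0"
    by (simp add: algebra_simps power_mult_distrib power_mult)
  then show ?thesis
    unfolding aw_monomial_def poly_prod using assms(1) by (intro prod_zero) auto
qed

definition aw_family :: "complex \<Rightarrow> nat \<Rightarrow> complex \<Rightarrow> complex \<Rightarrow> nat \<Rightarrow> complex poly" where
  "aw_family q N c d k = aw_monomial q k c * aw_monomial q (N - k) d"

lemma degree_aw_family_le:
  assumes "k \<le> N"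
  shows "degree (aw_family q N c d k) \<le> N"
proof -
  have "degree (aw_family q N c d k) \<le> k + (N - k)"
    unfolding aw_family_def by (intro order.trans[OF degree_mult_le] add_mono degree_aw_monomial_le)
  then show ?thesis using assms by simp
qed

lemma aw_family_Suc_left:
  "aw_family q (Suc N) c d (Suc k) = [:1 + c^2, -c:] * aw_family q N (c * q) d k"
  by (simp only: aw_family_def aw_monomial_Suc diff_Suc_Suc mult.assoc)

lemma aw_family_Suc_right:
  assumes "k \<le> N"
  shows "aw_family q (Suc N) c d k = [:1 + d^2, -d:] * aw_family q N c (d * q) k"
proof -
  have "Suc N - k = Suc (N - k)" using assms by simp
  then show ?thesis by (simp only: aw_family_def aw_monomial_Suc mult.left_commute)
qed

lemma aw_family_vanishes:
  assumes t: "t \<noteq> 0" and ij: "i + j < N" and c: "c * q^j = t"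
    and d: "d * q^i = t \<or> d * q^i = inverse t" and k: "k \<le> N"
  shows "poly (aw_family q N c d k) (t + inverse t) = 0"
proof (cases "j < k")
  case True
  then show ?thesis using poly_aw_monomial_eq_0[OF True t] c by (simp add: aw_family_def)
next
  case False
  then have "i < N - k" using ij k by linarith
  then show ?thesis using poly_aw_monomial_eq_0[OF _ t] d by (simp add: aw_family_def)
qed

definition aw_degenerate :: "complex \<Rightarrow> nat \<Rightarrow> complex \<Rightarrow> complex \<Rightarrow> bool" where
  "aw_degenerate q N c d \<longleftrightarrow>
     (c \<noteq> 0 \<and> d \<noteq> 0 \<and> (\<exists>m::int. 1 - int N \<le> m \<and> m \<le> int N - 1 \<and> c / d = q powi m))
     \<or> (\<exists>m::int. 1 - int N \<le> m \<and> m \<le> 0 \<and> c * d = q powi m)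
     \<or> (c = 0 \<and> d = 0)"

lemma aw_degenerate_Suc_left:
  assumes q: "q \<noteq> 0" and "aw_degenerate q N (c * q) d"
  shows "aw_degenerate q (Suc N) c d"
  using assms(2)[unfolded aw_degenerate_def]
proof (elim disjE conjE exE)
  fix m :: int
  assume "c * q \<noteq> 0" "d \<noteq> 0" "1 - int N \<le> m" "m \<le> int N - 1" and ratio: "c * q / d = q powi m"
  then have "c \<noteq> 0" "1 - int (Suc N) \<le> m - 1" "m - 1 \<le> int (Suc N) - 1" by auto
  moreover have "c / d = q powi (m - 1)" using ratio q by (simp add: power_int_diff field_simps)
  ultimately show ?thesis using \<open>d \<noteq> 0\<close> unfolding aw_degenerate_def by blast
next
  fix m :: int
  assume "1 - int N \<le> m" "m \<le> 0" and product: "c * q * d = q powi m"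
  then have "1 - int (Suc N) \<le> m - 1" "m - 1 \<le> 0" by auto
  moreover have "c * d = q powi (m - 1)" using product q by (simp add: power_int_diff field_simps)
  ultimately show ?thesis unfolding aw_degenerate_def by blast
qed (use q in \<open>simp add: aw_degenerate_def\<close>)

lemma aw_degenerate_Suc_right:
  assumes q: "q \<noteq> 0" and "aw_degenerate q N c (d * q)"
  shows "aw_degenerate q (Suc N) c d"
  using assms(2)[unfolded aw_degenerate_def]
proof (elim disjE conjE exE)
  fix m :: int
  assume "c \<noteq> 0" "d * q \<noteq> 0" "1 - int N \<le> m" "m \<le> int N - 1" and ratio: "c / (d * q) = q powi m"
  then have "d \<noteq> 0" "1 - int (Suc N) \<le> m + 1" "m + 1 \<le> int (Suc N) - 1" by auto
  moreover have "c / d = q powi (m + 1)" using ratio q calculation by (simp add: power_int_add field_simps)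
  ultimately show ?thesis using \<open>c \<noteq> 0\<close> unfolding aw_degenerate_def by blast
next
  fix m :: int
  assume "1 - int N \<le> m" "m \<le> 0" and product: "c * (d * q) = q powi m"
  then have "1 - int (Suc N) \<le> m - 1" "m - 1 \<le> 0" by auto
  moreover have "c * d = q powi (m - 1)" using product q by (simp add: power_int_diff field_simps)
  ultimately show ?thesis unfolding aw_degenerate_def by blast
qed (use q in \<open>simp add: aw_degenerate_def\<close>)

lemma aw_degenerate_Suc_if_det_0:
  assumes "(c - d) * (1 - c * d) = 0"
  shows "aw_degenerate q (Suc N) c d"
  using assms unfolding aw_degenerate_def
  by (cases "c = 0") (auto intro!: exI[of _ 0])

lemma aw_degenerate_common_root_parameter:
  assumes q: "q \<noteq> 0" and degenerate: "aw_degenerate q N c d" and nz: "\<not> (c = 0 \<and> d = 0)"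
  obtains t i j where "t \<noteq> 0" "i + j < N" "c * q^j = t" "d * q^i = t \<or> d * q^i = inverse t"
proof -
  from degenerate nz consider
    (ratio) m where "c \<noteq> 0" "d \<noteq> 0" "1 - int N \<le> m" "m \<le> int N - 1" "c / d = q powi m"
  | (product) m where "1 - int N \<le> m" "m \<le> 0" "c * d = q powi m"
    unfolding aw_degenerate_def by blast
  then show thesis
  proof cases
    case (ratio m)
    show thesis
    proof (cases "m \<ge> 0")
      case True
      then have "d * q ^ nat m = c" using ratio by (simp add: power_int_def field_simps)
      then show thesis using ratio True by (intro that[of c "nat m" 0]) auto
    next
      case False
      then have "c * q ^ nat (-m) = d" using ratio q by (simp add: power_int_def field_simps)
      then show thesis using ratio False by (intro that[of d 0 "nat (-m)"]) auto
    qed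
  next
    case (product m)
    then have nonzero: "c \<noteq> 0" "q powi m \<noteq> 0" using q by auto
    have "q powi m * q ^ nat (-m) = 1"
      using product(2) nonzero
      by (metis power_int_minus power_int_of_nat nat_0_le neg_0_le_iff_le right_inverse)
    then have "c * (d * q ^ nat (-m)) = 1"
      using product(3) by (simp add: mult.assoc[symmetric])
    then have "d * q ^ nat (-m) = inverse c"
      by (simp add: inverse_unique)
    then show thesis using product nonzero by (intro that[of c "nat (-m)" 0]) auto
  qed
qed

lemma aw_family_not_spans:
  assumes "N \<ge> 1" and q: "q \<noteq> 0" and "aw_degenerate q N c d"
  shows "\<not> spans_deg_le N (aw_family q N c d)"
proof (cases "c = 0 \<and> d = 0")
  case True
  then have "aw_family q N c d k = 1" for k
    by (simp add: aw_family_def aw_monomial_param_0)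
  then show ?thesis
    using assms(1) by (intro not_spans_deg_le_if_constant) simp_all
next
  case False
  then obtain t i j where "t \<noteq> 0" "i + j < N" "c * q^j = t" "d * q^i = t \<or> d * q^i = inverse t"
    using aw_degenerate_common_root_parameter[OF q assms(3)] by blast
  then show ?thesis
    using aw_family_vanishes by (intro not_spans_deg_le_if_common_zero) blast
qed

lemma aw_family_spans:
  assumes q: "q \<noteq> 0" and "\<not> aw_degenerate q N c d"
  shows "spans_deg_le N (aw_family q N c d)"
  using assms(2)
proof (induction N arbitrary: c d)
  case 0
  show ?case unfolding spans_deg_le_def
  proof (intro allI impI)
    fix p :: "complex poly"
    assume "degree p \<le> 0"
    then have "p = [:coeff p 0:]" by (metis degree_eq_zeroE coeff_pCons_0 le_zero_eq)
    then show "\<exists>a. p = (\<Sum>k\<le>0. smult (a k) (aw_family q 0 c d k))"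
      by (intro exI[of _ "\<lambda>_. coeff p 0"]) (simp add: aw_family_def aw_monomial_def one_pCons)
  qed
next
  case (Suc N)
  have span_c: "spans_deg_le N (aw_family q N (c * q) d)"
    using Suc aw_degenerate_Suc_left[OF q] by blast
  have span_d: "spans_deg_le N (aw_family q N c (d * q))"
    using Suc aw_degenerate_Suc_right[OF q] by blast
  have det: "(1 + c^2) * - d - - c * (1 + d^2) \<noteq> 0"
    using Suc.prems aw_degenerate_Suc_if_det_0[of c d q N]
    by (auto simp: algebra_simps power2_eq_square)
  show ?case unfolding spans_deg_le_def
  proof (intro allI impI)
    fix p :: "complex poly"
    assume "degree p \<le> Suc N"
    then obtain p1 p2 where "degree p1 \<le> N" "degree p2 \<le> N"
      and p: "p = [:1 + c^2, -c:] * p1 + [:1 + d^2, -d:] * p2"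
      using linear_pair_decomposition[OF det] by blast
    then obtain a b where
      a: "p1 = (\<Sum>k\<le>N. smult (a k) (aw_family q N (c * q) d k))" and
      b: "p2 = (\<Sum>k\<le>N. smult (b k) (aw_family q N c (d * q) k))"
      using span_c span_d unfolding spans_deg_le_def by meson
    let ?F = "aw_family q (Suc N) c d"
    have "p = (\<Sum>k\<le>N. smult (a k) (?F (Suc k))) + (\<Sum>k\<le>N. smult (b k) (?F k))"
      unfolding p a b sum_distrib_left
      by (simp add: aw_family_Suc_left aw_family_Suc_right mult.left_commute)
    also have "(\<Sum>k\<le>N. smult (a k) (?F (Suc k))) =
        (\<Sum>k\<le>Suc N. smult (case k of 0 \<Rightarrow> 0 | Suc j \<Rightarrow> a j) (?F k))"
      by (simp only: sum.atMost_Suc_shift) simp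
    also have "(\<Sum>k\<le>N. smult (b k) (?F k)) =
        (\<Sum>k\<le>Suc N. smult (if k \<le> N then b k else 0) (?F k))"
      by (simp add: sum.atMost_Suc)
    finally show "\<exists>e. p = (\<Sum>k\<le>Suc N. smult (e k) (?F k))"
      by (simp only: smult_add_left[symmetric] sum.distrib[symmetric]) (rule exI, rule refl)
  qed
qed

theorem mainTheorem1:
  fixes N :: nat and q c d :: complex
  assumes "N \<ge> 1" and "q \<noteq> 0"
  shows "is_basis_deg_le N (\<lambda>k. aw_monomial q k c * aw_monomial q (N - k) d) \<longleftrightarrow>
    \<not> ((c \<noteq> 0 \<and> d \<noteq> 0 \<and>
          (\<exists>m::int. 1 - int N \<le> m \<and> m \<le> int N - 1 \<and> c / d = q powi m))
       \<or> (\<exists>m::int. 1 - int N \<le> m \<and> m \<le> 0 \<and> c * d = q powi m)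
       \<or> (c = 0 \<and> d = 0))"
proof -
  have family: "(\<lambda>k. aw_monomial q k c * aw_monomial q (N - k) d) = aw_family q N c d"
    by (simp add: aw_family_def fun_eq_iff)
  have "is_basis_deg_le N (aw_family q N c d) \<longleftrightarrow> spans_deg_le N (aw_family q N c d)"
    using degree_aw_family_le by (intro is_basis_deg_le_iff_spans) blast
  also have "\<dots> \<longleftrightarrow> \<not> aw_degenerate q N c d"
    using aw_family_spans aw_family_not_spans assms by blast
  finally show ?thesis unfolding family aw_degenerate_def .
qed

end
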